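(* Let $\mathcal{H}$ be a hypertree, $T$ a host tree of $\mathcal{H}$, and $u,v$ two different vertices of $\mathcal{H}$. Then $uv$ is an edge of some host tree of $\mathcal{H}$ if and only if there exists an edge $e$ of the path $T[u,v]$ such that $I_\mathcal{H}(uv)=I_\mathcal{H}(e)$.
   Context: A hypergraph $\mathcal{H}$ has a finite vertex set $V(\mathcal{H})$ and a finite family of nonempty subsets (edges). A host tree is a tree on $V(\mathcal{H})$ in which every edge induces a connected subgraph; a hypertree is a hypergraph with a host tree. For $V'\subseteq V(\mathcal{H})$, $I_\mathcal{H}(V')$ is the intersection of all edges of $\mathcal{H}$ containing $V'$, or $V(\mathcal{H})$ if none does; for a pair, $I_\mathcal{H}(xy)=I_\mathcal{H}(\{x,y\})$, and for a tree edge $e=xy$, $I_\mathcal{H}(e)=I_\mathcal{H}(\{x,y\})$. $T[u,v]$ is the path in $T$ from $u$ to $v$. *)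

theory Defs
  imports Main
begin

definition hypergraph :: "'a set \<Rightarrow> 'a set set \<Rightarrow> bool" where
  "hypergraph V E \<longleftrightarrow> finite V \<and> (\<forall>e\<in>E. e \<noteq> {} \<and> e \<subseteq> V)"

definition adj_in :: "'a set set \<Rightarrow> 'a set \<Rightarrow> ('a \<times> 'a) set" where
  "adj_in T S = {(x, y). {x, y} \<in> T \<and> x \<noteq> y \<and> x \<in> S \<and> y \<in> S}"

definition induces_connected :: "'a set set \<Rightarrow> 'a set \<Rightarrow> bool" where
  "induces_connected T S \<longleftrightarrow> (\<forall>x\<in>S. \<forall>y\<in>S. (x, y) \<in> (adj_in T S)\<^sup>*)"

definition graph_on :: "'a set \<Rightarrow> 'a set set \<Rightarrow> bool" where
  "graph_on V T \<longleftrightarrow> (\<forall>e\<in>T. \<exists>x y. x \<noteq> y \<and> x \<in> V \<and> y \<in> V \<and> e = {x, y})"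

definition is_tree :: "'a set \<Rightarrow> 'a set set \<Rightarrow> bool" where
  "is_tree V T \<longleftrightarrow> graph_on V T \<and> induces_connected T V \<and>
     (\<forall>e\<in>T. \<not> induces_connected (T - {e}) V)"

definition host_tree :: "'a set \<Rightarrow> 'a set set \<Rightarrow> 'a set set \<Rightarrow> bool" where
  "host_tree V E T \<longleftrightarrow> is_tree V T \<and> (\<forall>e\<in>E. induces_connected T e)"

definition hypertree :: "'a set \<Rightarrow> 'a set set \<Rightarrow> bool" where
  "hypertree V E \<longleftrightarrow> hypergraph V E \<and> (\<exists>T. host_tree V E T)"

definition I_H :: "'a set \<Rightarrow> 'a set set \<Rightarrow> 'a set \<Rightarrow> 'a set" where
  "I_H V E X = (if \<exists>e\<in>E. X \<subseteq> e then \<Inter>{e\<in>E. X \<subseteq> e} else V)"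

definition is_vpath :: "'a set set \<Rightarrow> 'a list \<Rightarrow> bool" where
  "is_vpath T ps \<longleftrightarrow> ps \<noteq> [] \<and> distinct ps \<and>
     (\<forall>i. Suc i < length ps \<longrightarrow> {ps ! i, ps ! Suc i} \<in> T)"

text \<open>Edges of the path T[u,v] (in a tree this path is unique).\<close>
definition path_edges :: "'a set set \<Rightarrow> 'a \<Rightarrow> 'a \<Rightarrow> 'a set set" where
  "path_edges T u v = {{ps ! i, ps ! Suc i} | ps i.
      is_vpath T ps \<and> hd ps = u \<and> last ps = v \<and> Suc i < length ps}"

end

(*
  An edge xy of a tree T separates its ends, and every set that is connected in T and contains
  two vertices separated by xy also contains x and y.

  If uv is an edge of a host tree T', the path T[u,v] leaves the component of u in T' - uv along
  some edge xy.  Then xy separates u and v in T while uv separates x and y in T', so a hyperedge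
  contains u and v iff it contains x and y, i.e. I(uv) = I(xy).

  Conversely, if I(uv) = I(xy) for an edge xy of T[u,v], every hyperedge containing x and y
  contains u and v, and exchanging xy for uv yields a host tree: in a hyperedge that used xy,
  one of x, y is still linked to u and the other to v, so the new edge uv reconnects them.
*)
theory Submission
  imports Defs
begin

abbreviation linked_in :: "'a set set \<Rightarrow> 'a set \<Rightarrow> 'a \<Rightarrow> 'a \<Rightarrow> bool" where
  "linked_in T S x y \<equiv> (x, y) \<in> (adj_in T S)\<^sup>*"

lemma ex_nth_crossing:
  assumes "xs \<noteq> []" "P (hd xs)" "\<not> P (last xs)"
  shows "\<exists>i. Suc i < length xs \<and> P (xs ! i) \<and> \<not> P (xs ! Suc i)"
proof -
  have "\<exists>i<n. P (xs ! i) \<and> \<not> P (xs ! Suc i)" if "P (xs ! 0)" "\<not> P (xs ! n)" for n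
    using that by (induction n) (auto, metis less_Suc_eq)
  from this[of "length xs - 1"] assms obtain i
    where "i < length xs - 1" "P (xs ! i)" "\<not> P (xs ! Suc i)"
    by (auto simp: hd_conv_nth last_conv_nth)
  then show ?thesis
    by (intro exI[of _ i]) auto
qed

lemma rtrancl_insert_sym_pair:
  "(insert (u, v) (insert (v, u) r))\<^sup>* =
     r\<^sup>* \<union> {(a, b). ((a, u) \<in> r\<^sup>* \<or> (a, v) \<in> r\<^sup>*) \<and> ((u, b) \<in> r\<^sup>* \<or> (v, b) \<in> r\<^sup>*)}"
  by (auto simp: rtrancl_insert)

lemma rtrancl_exchange_sym_pair:
  assumes "sym r" "(a, b) \<in> (insert (u, v) (insert (v, u) r))\<^sup>*" "(a, b) \<notin> r\<^sup>*"
  shows "(u, v) \<in> (insert (a, b) (insert (b, a) r))\<^sup>*"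
proof -
  have sym: "(y, x) \<in> r\<^sup>*" if "(x, y) \<in> r\<^sup>*" for x y
    using sym_rtrancl[OF assms(1)] that by (rule symD)
  show ?thesis
    using assms(2,3) by (auto simp: rtrancl_insert_sym_pair intro: sym rtrancl_trans)
qed

lemma sym_adj_in: "sym (adj_in T S)"
  by (auto simp: sym_def adj_in_def insert_commute)

lemma linked_in_sym: "linked_in T S x y \<Longrightarrow> linked_in T S y x"
  using sym_rtrancl[OF sym_adj_in] by (rule symD)

lemma adj_in_mono: "T \<subseteq> T' \<Longrightarrow> S \<subseteq> S' \<Longrightarrow> adj_in T S \<subseteq> adj_in T' S'"
  by (auto simp: adj_in_def)

lemma linked_in_mono: "linked_in T S x y \<Longrightarrow> T \<subseteq> T' \<Longrightarrow> S \<subseteq> S' \<Longrightarrow> linked_in T' S' x y"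
  using rtrancl_mono[OF adj_in_mono] by blast

lemma adj_in_insert_edge:
  "u \<in> S \<Longrightarrow> v \<in> S \<Longrightarrow> u \<noteq> v \<Longrightarrow>
    adj_in (insert {u, v} T) S = insert (u, v) (insert (v, u) (adj_in T S))"
  unfolding adj_in_def by (auto simp: doubleton_eq_iff insert_commute)

lemma adj_in_subset_Diff_edge:
  "adj_in T S \<subseteq> insert (x, y) (insert (y, x) (adj_in (T - {{x, y}}) S))"
  unfolding adj_in_def by (auto simp: doubleton_eq_iff)

lemma induces_connected_replace_edge:
  assumes "induces_connected T S" "T - {{x, y}} \<subseteq> T'" "linked_in T' S x y"
  shows "induces_connected T' S"
proof -
  have "adj_in T S \<subseteq> insert (x, y) (insert (y, x) (adj_in T' S))"
    using adj_in_subset_Diff_edge[of T S x y] adj_in_mono[OF assms(2) order_refl] by blast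
  also have "\<dots> \<subseteq> (adj_in T' S)\<^sup>*"
    using assms(3) linked_in_sym[OF assms(3)] by auto
  finally have "(adj_in T S)\<^sup>* \<subseteq> (adj_in T' S)\<^sup>*"
    by (rule rtrancl_subset_rtrancl)
  with assms(1) show ?thesis
    unfolding induces_connected_def by blast
qed

lemma tree_edge_separates:
  assumes "is_tree V T" "{a, b} \<in> T"
  shows "\<not> linked_in (T - {{a, b}}) V a b"
proof
  assume linked: "linked_in (T - {{a, b}}) V a b"
  have "induces_connected T V"
    using assms(1) by (simp add: is_tree_def)
  then have "induces_connected (T - {{a, b}}) V"
    using order_refl linked by (rule induces_connected_replace_edge)
  with assms show False
    by (simp add: is_tree_def)
qed

lemma separating_edge_subset:
  assumes "induces_connected T S" "S \<subseteq> V" "u \<in> S" "v \<in> S" "\<not> linked_in (T - {e}) V u v"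
  shows "e \<subseteq> S"
proof (rule ccontr)
  assume "\<not> e \<subseteq> S"
  with assms(2) have "adj_in T S \<subseteq> adj_in (T - {e}) V"
    by (auto simp: adj_in_def)
  moreover have "linked_in T S u v"
    using assms(1,3,4) by (simp add: induces_connected_def)
  ultimately have "linked_in (T - {e}) V u v"
    by (meson rtrancl_mono subsetD)
  with assms(5) show False ..
qed

lemma induces_connected_exchange:
  assumes "induces_connected T S" "u \<in> S" "v \<in> S" "\<not> linked_in (T - {{x, y}}) S u v"
  shows "induces_connected (insert {u, v} (T - {{x, y}})) S"
proof -
  let ?R = "adj_in (T - {{x, y}}) S"
  have "u \<noteq> v"
    using assms(4) by auto
  have "linked_in T S u v"
    using assms(1-3) by (simp add: induces_connected_def)
  then have "(u, v) \<in> (insert (x, y) (insert (y, x) ?R))\<^sup>*"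
    using rtrancl_mono[OF adj_in_subset_Diff_edge] by (rule subsetD[rotated])
  then have "(x, y) \<in> (insert (u, v) (insert (v, u) ?R))\<^sup>*"
    using assms(4) by (rule rtrancl_exchange_sym_pair[OF sym_adj_in])
  then have "linked_in (insert {u, v} (T - {{x, y}})) S x y"
    by (simp add: adj_in_insert_edge assms(2,3) \<open>u \<noteq> v\<close>)
  with assms(1) show ?thesis
    by (meson induces_connected_replace_edge subset_insertI)
qed

lemma linked_in_if_exchange_reconnects:
  assumes "is_tree V T" "G \<subseteq> T" "{a, b} \<in> G" "a \<in> V" "b \<in> V" "a \<noteq> b"
    and "u \<in> V" "v \<in> V" "u \<noteq> v" "linked_in (insert {u, v} (G - {{a, b}})) V a b"
  shows "linked_in G V u v"
proof -
  let ?R = "adj_in (G - {{a, b}}) V"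
  have "(a, b) \<in> (insert (u, v) (insert (v, u) ?R))\<^sup>*"
    using assms(10) by (simp add: adj_in_insert_edge assms(7-9))
  moreover have "(a, b) \<notin> ?R\<^sup>*"
  proof
    assume "(a, b) \<in> ?R\<^sup>*"
    moreover have "G - {{a, b}} \<subseteq> T - {{a, b}}"
      using assms(2) by blast
    ultimately have "linked_in (T - {{a, b}}) V a b"
      using order_refl by (rule linked_in_mono)
    moreover have "{a, b} \<in> T"
      using assms(2,3) by blast
    ultimately show False
      using tree_edge_separates[OF assms(1)] by blast
  qed
  ultimately have "(u, v) \<in> (insert (a, b) (insert (b, a) ?R))\<^sup>*"
    by (rule rtrancl_exchange_sym_pair[OF sym_adj_in])
  moreover have "insert {a, b} (G - {{a, b}}) = G"
    using assms(3) by blast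
  ultimately show ?thesis
    using adj_in_insert_edge[OF assms(4-6), of "G - {{a, b}}"] by simp
qed

lemma tree_exchange:
  assumes "is_tree V T" "u \<in> V" "v \<in> V" "\<not> linked_in (T - {{x, y}}) V u v"
  shows "is_tree V (insert {u, v} (T - {{x, y}}))"
proof -
  let ?T' = "insert {u, v} (T - {{x, y}})"
  have "u \<noteq> v"
    using assms(4) by auto
  with assms(1-3) have "graph_on V ?T'"
    by (auto simp: is_tree_def graph_on_def)
  moreover have "induces_connected ?T' V"
    using assms by (auto simp: is_tree_def intro!: induces_connected_exchange[of T])
  moreover have "\<not> induces_connected (?T' - {h}) V" if "h \<in> ?T'" for h
  proof
    assume connected: "induces_connected (?T' - {h}) V"
    show False
    proof (cases "h = {u, v}")
      case True
      with connected assms(2,3) have "linked_in (?T' - {h}) V u v"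
        by (simp add: induces_connected_def)
      then have "linked_in (T - {{x, y}}) V u v"
        by (rule linked_in_mono) (auto simp: True)
      with assms(4) show False ..
    next
      case False
      with that have h: "h \<in> T - {{x, y}}"
        by simp
      with assms(1) obtain a b where ab: "h = {a, b}" "a \<in> V" "b \<in> V" "a \<noteq> b"
        unfolding is_tree_def graph_on_def by blast
      have "?T' - {h} = insert {u, v} (T - {{x, y}} - {{a, b}})"
        using False ab(1) by auto
      with connected ab(2,3) have "linked_in (insert {u, v} (T - {{x, y}} - {{a, b}})) V a b"
        by (simp add: induces_connected_def)
      then have "linked_in (T - {{x, y}}) V u v"
        by (rule linked_in_if_exchange_reconnects[OF assms(1) Diff_subset h[unfolded ab(1)]
              ab(2-4) assms(2,3) \<open>u \<noteq> v\<close>])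
      with assms(4) show False ..
    qed
  qed
  ultimately show ?thesis
    by (simp add: is_tree_def)
qed

lemma host_tree_exchange:
  assumes "hypergraph V E" "host_tree V E T" "u \<in> V" "v \<in> V"
    and separated: "\<not> linked_in (T - {{x, y}}) V u v"
    and edge_implies: "\<forall>f\<in>E. {x, y} \<subseteq> f \<longrightarrow> {u, v} \<subseteq> f"
  shows "host_tree V E (insert {u, v} (T - {{x, y}}))"
proof -
  let ?T' = "insert {u, v} (T - {{x, y}})"
  have "induces_connected ?T' f" if "f \<in> E" for f
  proof -
    have connected: "induces_connected T f"
      using assms(2) that by (simp add: host_tree_def)
    show ?thesis
    proof (cases "{x, y} \<subseteq> f")
      case True
      have "f \<subseteq> V"
        using assms(1) that by (simp add: hypergraph_def)
      have uv_f: "u \<in> f" "v \<in> f"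
        using True edge_implies that by auto
      have "\<not> linked_in (T - {{x, y}}) f u v"
      proof
        assume "linked_in (T - {{x, y}}) f u v"
        then have "linked_in (T - {{x, y}}) V u v"
          using order_refl \<open>f \<subseteq> V\<close> by (rule linked_in_mono)
        with separated show False ..
      qed
      with connected uv_f show ?thesis
        by (rule induces_connected_exchange)
    next
      case False
      have "adj_in T f \<subseteq> adj_in ?T' f"
      proof
        fix p assume "p \<in> adj_in T f"
        then obtain c d where p: "p = (c, d)" "{c, d} \<in> T" "c \<noteq> d" "c \<in> f" "d \<in> f"
          by (auto simp: adj_in_def)
        with False have "{c, d} \<noteq> {x, y}"
          by auto
        with p show "p \<in> adj_in ?T' f"
          by (simp add: adj_in_def)
      qed
      then show ?thesis
        using connected unfolding induces_connected_def by (meson rtrancl_mono subsetD)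
    qed
  qed
  moreover have "is_tree V ?T'"
    using assms(2) tree_exchange[OF _ assms(3,4) separated] by (simp add: host_tree_def)
  ultimately show ?thesis
    by (simp add: host_tree_def)
qed

lemma exists_vpath:
  assumes "linked_in T S u v"
  shows "\<exists>ps. is_vpath T ps \<and> hd ps = u \<and> last ps = v"
  using assms
proof (induction rule: rtrancl_induct)
  case base
  have "is_vpath T [u]"
    by (simp add: is_vpath_def)
  then show ?case
    by force
next
  case (step w z)
  then obtain ps where ps: "is_vpath T ps" "hd ps = u" "last ps = w"
    by blast
  show ?case
  proof (cases "z \<in> set ps")
    case True
    then obtain n where n: "n < length ps" "ps ! n = z"
      by (metis in_set_conv_nth)
    have "is_vpath T (take (Suc n) ps)"
      using ps(1) n(1) by (auto simp: is_vpath_def)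
    moreover have "hd (take (Suc n) ps) = u"
      using ps(1,2) by (auto simp: is_vpath_def)
    moreover have "last (take (Suc n) ps) = z"
      using n by (simp add: take_Suc_conv_app_nth)
    ultimately show ?thesis
      by blast
  next
    case False
    have "{w, z} \<in> T"
      using step(2) by (simp add: adj_in_def)
    with ps False have "is_vpath T (ps @ [z])"
      by (auto simp: is_vpath_def nth_append less_Suc_eq last_conv_nth) (metis diff_Suc_Suc diff_zero)
    with ps show ?thesis
      by (metis hd_append2 is_vpath_def last_snoc)
  qed
qed

lemma rtrancl_nth_chain:
  assumes "\<forall>k. j \<le> k \<and> k < l \<longrightarrow> (xs ! k, xs ! Suc k) \<in> R" "j \<le> l"
  shows "(xs ! j, xs ! l) \<in> R\<^sup>*"
  using assms
proof (induction l)
  case 0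
  then show ?case
    by simp
next
  case (Suc l)
  show ?case
  proof (cases "j = Suc l")
    case True
    then show ?thesis
      by simp
  next
    case False
    with Suc have "(xs ! j, xs ! l) \<in> R\<^sup>*" "(xs ! l, xs ! Suc l) \<in> R"
      by simp_all
    then show ?thesis
      by (rule rtrancl_into_rtrancl)
  qed
qed

lemma distinct_nth_edge_eqD:
  assumes "distinct xs" "Suc j < length xs" "Suc i < length xs"
    and "{xs ! j, xs ! Suc j} = {xs ! i, xs ! Suc i}"
  shows "j = i"
  using assms by (auto simp: doubleton_eq_iff nth_eq_iff_index_eq)

lemma vpath_other_edge_in_adj_in:
  assumes "graph_on V T" "is_vpath T ps" "Suc k < length ps" "Suc i < length ps" "k \<noteq> i"
  shows "(ps ! k, ps ! Suc k) \<in> adj_in (T - {{ps ! i, ps ! Suc i}}) V"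
proof -
  have "distinct ps" and edge: "{ps ! k, ps ! Suc k} \<in> T"
    using assms(2,3) by (simp_all add: is_vpath_def)
  with assms(1) obtain a b where "a \<in> V" "b \<in> V" "{ps ! k, ps ! Suc k} = {a, b}"
    unfolding graph_on_def by blast
  then have "ps ! k \<in> V" "ps ! Suc k \<in> V"
    by (auto simp: doubleton_eq_iff)
  moreover have "ps ! k \<noteq> ps ! Suc k"
    using \<open>distinct ps\<close> assms(3) by (simp add: nth_eq_iff_index_eq)
  moreover have "{ps ! k, ps ! Suc k} \<noteq> {ps ! i, ps ! Suc i}"
    using distinct_nth_edge_eqD[OF \<open>distinct ps\<close> assms(3,4)] assms(5) by blast
  ultimately show ?thesis
    using edge by (simp add: adj_in_def)
qed

lemma vpath_edge_separates:
  assumes "is_tree V T" "is_vpath T ps" "Suc i < length ps"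
  shows "\<not> linked_in (T - {{ps ! i, ps ! Suc i}}) V (hd ps) (last ps)"
proof
  let ?R = "adj_in (T - {{ps ! i, ps ! Suc i}}) V"
  assume ends: "(hd ps, last ps) \<in> ?R\<^sup>*"
  have "ps \<noteq> []"
    using assms(2) by (simp add: is_vpath_def)
  have step: "(ps ! k, ps ! Suc k) \<in> ?R" if "Suc k < length ps" "k \<noteq> i" for k
    using assms(1) that assms(2,3)
    by (intro vpath_other_edge_in_adj_in) (auto simp: is_tree_def)
  have "(ps ! 0, ps ! i) \<in> ?R\<^sup>*"
    by (rule rtrancl_nth_chain) (use step assms(3) in auto)
  then have "(ps ! i, hd ps) \<in> ?R\<^sup>*"
    using \<open>ps \<noteq> []\<close> by (simp add: hd_conv_nth linked_in_sym)
  moreover have "(ps ! Suc i, ps ! (length ps - 1)) \<in> ?R\<^sup>*"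
    by (rule rtrancl_nth_chain) (use step assms(3) in auto)
  then have "(last ps, ps ! Suc i) \<in> ?R\<^sup>*"
    using \<open>ps \<noteq> []\<close> by (simp add: last_conv_nth linked_in_sym)
  ultimately have "(ps ! i, ps ! Suc i) \<in> ?R\<^sup>*"
    using ends by (meson rtrancl_trans)
  moreover have "{ps ! i, ps ! Suc i} \<in> T"
    using assms(2,3) by (simp add: is_vpath_def)
  ultimately show False
    using tree_edge_separates[OF assms(1)] by blast
qed

lemma I_H_cong: "{f \<in> E. X \<subseteq> f} = {f \<in> E. Y \<subseteq> f} \<Longrightarrow> I_H V E X = I_H V E Y"
  unfolding I_H_def by (metis (no_types, lifting) empty_Collect_eq)

lemma subset_I_H: "X \<subseteq> V \<Longrightarrow> X \<subseteq> I_H V E X"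
  unfolding I_H_def by auto

lemma I_H_subset_edge: "f \<in> E \<Longrightarrow> X \<subseteq> f \<Longrightarrow> I_H V E X \<subseteq> f"
  unfolding I_H_def by auto

lemma edges_containing_eq_if_separating:
  assumes "hypergraph V E" "host_tree V E T" "host_tree V E T'"
    and "\<not> linked_in (T - {{x, y}}) V u v" "\<not> linked_in (T' - {{u, v}}) V x y"
  shows "{f \<in> E. {u, v} \<subseteq> f} = {f \<in> E. {x, y} \<subseteq> f}"
proof (intro Collect_cong conj_cong refl)
  fix f assume "f \<in> E"
  with assms(1-3) have f: "f \<subseteq> V" "induces_connected T f" "induces_connected T' f"
    by (auto simp: hypergraph_def host_tree_def)
  show "{u, v} \<subseteq> f \<longleftrightarrow> {x, y} \<subseteq> f"
  proof
    assume "{u, v} \<subseteq> f"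
    then show "{x, y} \<subseteq> f"
      using separating_edge_subset[OF f(2,1) _ _ assms(4)] by simp
  next
    assume "{x, y} \<subseteq> f"
    then show "{u, v} \<subseteq> f"
      using separating_edge_subset[OF f(3,1) _ _ assms(5)] by simp
  qed
qed

lemma I_H_eq_path_edge_if_host_tree_edge:
  assumes hyp: "hypergraph V E" and host: "host_tree V E T" "host_tree V E T'"
    and uv: "{u, v} \<in> T'" "u \<in> V" "v \<in> V"
  shows "\<exists>e\<in>path_edges T u v. I_H V E {u, v} = I_H V E e"
proof -
  have tree: "is_tree V T" "is_tree V T'"
    using host by (simp_all add: host_tree_def)
  then have "linked_in T V u v"
    using uv(2,3) by (simp add: is_tree_def induces_connected_def)
  then obtain ps where ps: "is_vpath T ps" "hd ps = u" "last ps = v"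
    by (meson exists_vpath)
  let ?R = "adj_in (T' - {{u, v}}) V"
  have "ps \<noteq> []"
    using ps(1) by (simp add: is_vpath_def)
  moreover have "(u, hd ps) \<in> ?R\<^sup>*"
    using ps(2) by simp
  moreover have "(u, last ps) \<notin> ?R\<^sup>*"
    using ps(3) tree_edge_separates[OF tree(2) uv(1)] by simp
  ultimately obtain i where i: "Suc i < length ps" "(u, ps ! i) \<in> ?R\<^sup>*" "(u, ps ! Suc i) \<notin> ?R\<^sup>*"
    using ex_nth_crossing[of ps "\<lambda>w. (u, w) \<in> ?R\<^sup>*"] by blast
  let ?x = "ps ! i" and ?y = "ps ! Suc i"
  have path_edge: "{?x, ?y} \<in> path_edges T u v"
    unfolding path_edges_def using ps i(1) by fastforce
  have "\<not> linked_in (T - {{?x, ?y}}) V u v"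
    using vpath_edge_separates[OF tree(1) ps(1) i(1)] ps(2,3) by simp
  moreover have "\<not> linked_in (T' - {{u, v}}) V ?x ?y"
  proof
    assume "linked_in (T' - {{u, v}}) V ?x ?y"
    with i(2) have "(u, ?y) \<in> ?R\<^sup>*"
      by (rule rtrancl_trans)
    with i(3) show False ..
  qed
  ultimately have "{f \<in> E. {u, v} \<subseteq> f} = {f \<in> E. {?x, ?y} \<subseteq> f}"
    by (rule edges_containing_eq_if_separating[OF hyp host])
  then have "I_H V E {u, v} = I_H V E {?x, ?y}"
    by (rule I_H_cong)
  with path_edge show ?thesis
    by blast
qed

lemma host_tree_edge_if_I_H_eq_path_edge:
  assumes hyp: "hypergraph V E" and host: "host_tree V E T" and "u \<in> V" "v \<in> V"
    and e: "e \<in> path_edges T u v" "I_H V E {u, v} = I_H V E e"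
  shows "\<exists>T'. host_tree V E T' \<and> {u, v} \<in> T'"
proof -
  obtain ps i where ps: "e = {ps ! i, ps ! Suc i}" "is_vpath T ps" "hd ps = u" "last ps = v"
      "Suc i < length ps"
    using e(1) unfolding path_edges_def by blast
  have "is_tree V T"
    using host by (simp add: host_tree_def)
  then have "\<not> linked_in (T - {e}) V u v"
    using vpath_edge_separates[OF _ ps(2,5)] ps(1,3,4) by simp
  moreover have "\<forall>f\<in>E. e \<subseteq> f \<longrightarrow> {u, v} \<subseteq> f"
  proof (intro ballI impI)
    fix f assume "f \<in> E" "e \<subseteq> f"
    have "{u, v} \<subseteq> I_H V E {u, v}"
      using assms(3,4) by (intro subset_I_H) simp
    also have "\<dots> = I_H V E e"
      by (fact e(2))
    also have "\<dots> \<subseteq> f"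
      using \<open>f \<in> E\<close> \<open>e \<subseteq> f\<close> by (rule I_H_subset_edge)
    finally show "{u, v} \<subseteq> f" .
  qed
  ultimately have "host_tree V E (insert {u, v} (T - {e}))"
    using host_tree_exchange[OF hyp host assms(3,4)] ps(1) by simp
  then show ?thesis
    by blast
qed

theorem mainTheorem11:
  fixes V :: "'a set" and E :: "'a set set" and T :: "'a set set" and u v :: 'a
  assumes "hypertree V E"
    and "host_tree V E T"
    and "u \<in> V" and "v \<in> V" and "u \<noteq> v"
  shows "(\<exists>T'. host_tree V E T' \<and> {u, v} \<in> T') \<longleftrightarrow>
         (\<exists>e\<in>path_edges T u v. I_H V E {u, v} = I_H V E e)"
proof
  have hyp: "hypergraph V E"
    using assms(1) by (simp add: hypertree_def)
  show "\<exists>e\<in>path_edges T u v. I_H V E {u, v} = I_H V E e"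
    if "\<exists>T'. host_tree V E T' \<and> {u, v} \<in> T'"
    using that I_H_eq_path_edge_if_host_tree_edge[OF hyp assms(2) _ _ assms(3,4)] by blast
  show "\<exists>T'. host_tree V E T' \<and> {u, v} \<in> T'"
    if "\<exists>e\<in>path_edges T u v. I_H V E {u, v} = I_H V E e"
    using that host_tree_edge_if_I_H_eq_path_edge[OF hyp assms(2-4)] by blast
qed

end
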